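(* For every $j\in\{1,\dots,N\}$ with $S_j\neq\emptyset$, let $V^{(j),\rm opt}$ be the optimal value of (P1) with pairs restricted to $\mathcal M^{\rm narrow}$ and metric $p$ replaced by $p_1^{(j)}$. Then $p_2^{(j-1)}(U_j^*,c_j^* )\ge V^{(j),\rm opt}/(T+1+\Delta+2J)$.
   Context: Setup as for problem (P1): users $\{1,\dots,K\}$ partitioned into groups $\mathcal G_1,\dots,\mathcal G_L$; $N$ RBs; chunks are vectors $c\in\{0,1\}^N$ whose ones form a nonempty contiguous block, ${\rm Tail}(c)$ the last index of $c$, chunks intersect if they share an index; $\mathcal U$ = nonempty $U\subseteq\{1,\dots,K\}$ with $|U|\le T$, $|U\cap\mathcal G_s|\le1\ \forall s$; pairs are elements of $\mathcal U\times\mathcal C$. Metrics $p\ge0$; weights $\beta^q\in[0,1]$ ($q=1,\dots,J$); binary weights $\alpha^q\in\{0,1\}$ ($q\in\mathcal I$) with $\sum_{q\in\mathcal I}\alpha^q(U,c)\le\Delta$ per pair. A set $F$ of pairs is feasible if each group meets $U$ for at most one element of $F$, each RB lies in $c$ for at most one element, $\sum_F\beta^q\le1$ ($q\le J$) and $\sum_F\alpha^q\le1$ ($q\in\mathcal I$); (P1) maximizes the sum of the metric over feasible $F$. Pairs $(U,c),(U',c')$ conflict if some group meets both $U,U'$, or $c,c'$ intersect, or some $q\in\mathcal I$ has $\alpha^q(U,c)=\alpha^q(U',c')=1$. $\mathcal M^{\rm narrow}$ = pairs with $\beta^q\le1/2$ for all $q\le J$; $\max_q\beta^q:=0$ if $J=0$;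 $(x)^+=\max\{x,0\}$. Recursion: $p_2^{(0)}=p$ on $\mathcal M^{\rm narrow}$. For $j=1,\dots,N$: let $(U_j^*,c_j^* )$ maximize $p_2^{(j-1)}$ over pairs of $\mathcal M^{\rm narrow}$ with ${\rm Tail}(c)=j$; $S_j=(U_j^*,c_j^* )$ if $p_2^{(j-1)}(U_j^*,c_j^* )>0$, else $S_j=\emptyset$. For $(U,c)\in\mathcal M^{\rm narrow}$, $p_1^{(j)}(U,c)=(p_2^{(j-1)}(U_j^*,c_j^* ))^+\mathbf 1[p_2^{(j-1)}(U,c)>0]$ if $(U,c)$ conflicts with $(U_j^*,c_j^* )$, and $p_1^{(j)}(U,c)=2(p_2^{(j-1)}(U_j^*,c_j^* ))^+\mathbf 1[p_2^{(j-1)}(U,c)>0]\max_{q\le J}\beta^q(U,c)$ otherwise; $p_2^{(j)}=p_2^{(j-1)}-p_1^{(j)}$. *)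

theory Defs
  imports Complex_Main
begin

text \<open>A pair is (U, c): a user set U and a chunk c, the chunk being represented by
  its support (the set of RB indices where the 0/1 vector equals 1).\<close>
type_synonym pair = "nat set \<times> nat set"

definition chunks :: "nat \<Rightarrow> nat set set" where
  "chunks N = {{a..b} | a b. 1 \<le> a \<and> a \<le> b \<and> b \<le> N}"

definition Tail :: "nat set \<Rightarrow> nat" where
  "Tail c = Max c"

definition users :: "nat \<Rightarrow> nat \<Rightarrow> nat \<Rightarrow> (nat \<Rightarrow> nat set) \<Rightarrow> nat set set" where
  "users K L T G = {U. U \<noteq> {} \<and> U \<subseteq> {1..K} \<and> card U \<le> T \<and>
                        (\<forall>s\<in>{1..L}. card (U \<inter> G s) \<le> 1)}"

definition pairs :: "nat \<Rightarrow> nat \<Rightarrow> nat \<Rightarrow> (nat \<Rightarrow> nat set) \<Rightarrow> nat \<Rightarrow> pair set" where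
  "pairs K L T G N = users K L T G \<times> chunks N"

definition narrow :: "nat \<Rightarrow> nat \<Rightarrow> nat \<Rightarrow> (nat \<Rightarrow> nat set) \<Rightarrow> nat \<Rightarrow>
                      nat \<Rightarrow> (nat \<Rightarrow> pair \<Rightarrow> real) \<Rightarrow> pair set" where
  "narrow K L T G N J \<beta> = {x \<in> pairs K L T G N. \<forall>q\<in>{1..J}. \<beta> q x \<le> 1/2}"

definition maxbeta :: "nat \<Rightarrow> (nat \<Rightarrow> pair \<Rightarrow> real) \<Rightarrow> pair \<Rightarrow> real" where
  "maxbeta J \<beta> x = (if J = 0 then 0 else Max ((\<lambda>q. \<beta> q x) ` {1..J}))"

definition conflict :: "nat \<Rightarrow> (nat \<Rightarrow> nat set) \<Rightarrow> nat set \<Rightarrow> (nat \<Rightarrow> pair \<Rightarrow> real)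
                        \<Rightarrow> pair \<Rightarrow> pair \<Rightarrow> bool" where
  "conflict L G I \<alpha> x y \<longleftrightarrow>
     (\<exists>s\<in>{1..L}. fst x \<inter> G s \<noteq> {} \<and> fst y \<inter> G s \<noteq> {}) \<or>
     snd x \<inter> snd y \<noteq> {} \<or>
     (\<exists>q\<in>I. \<alpha> q x = 1 \<and> \<alpha> q y = 1)"

definition feasible :: "nat \<Rightarrow> (nat \<Rightarrow> nat set) \<Rightarrow> nat \<Rightarrow> nat \<Rightarrow> (nat \<Rightarrow> pair \<Rightarrow> real)
                        \<Rightarrow> nat set \<Rightarrow> (nat \<Rightarrow> pair \<Rightarrow> real) \<Rightarrow> pair set \<Rightarrow> bool" where
  "feasible L G N J \<beta> I \<alpha> F \<longleftrightarrow>
     (\<forall>s\<in>{1..L}. card {x\<in>F. fst x \<inter> G s \<noteq> {}} \<le> 1) \<and>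
     (\<forall>n\<in>{1..N}. card {x\<in>F. n \<in> snd x} \<le> 1) \<and>
     (\<forall>q\<in>{1..J}. (\<Sum>x\<in>F. \<beta> q x) \<le> 1) \<and>
     (\<forall>q\<in>I. (\<Sum>x\<in>F. \<alpha> q x) \<le> 1)"

definition opt_val :: "pair set \<Rightarrow> nat \<Rightarrow> (nat \<Rightarrow> nat set) \<Rightarrow> nat \<Rightarrow> nat \<Rightarrow> (nat \<Rightarrow> pair \<Rightarrow> real)
                        \<Rightarrow> nat set \<Rightarrow> (nat \<Rightarrow> pair \<Rightarrow> real) \<Rightarrow> (pair \<Rightarrow> real) \<Rightarrow> real" where
  "opt_val M L G N J \<beta> I \<alpha> f =
     Max {(\<Sum>x\<in>F. f x) | F. F \<subseteq> M \<and> feasible L G N J \<beta> I \<alpha> F}"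

text \<open>p_1^{(j)} given q2 = p_2^{(j-1)} and the selected pair s = (U_j^*, c_j^*).\<close>
definition rec_p1 :: "nat \<Rightarrow> (nat \<Rightarrow> nat set) \<Rightarrow> nat set \<Rightarrow> (nat \<Rightarrow> pair \<Rightarrow> real) \<Rightarrow> nat
                      \<Rightarrow> (nat \<Rightarrow> pair \<Rightarrow> real) \<Rightarrow> (pair \<Rightarrow> real) \<Rightarrow> pair \<Rightarrow> pair \<Rightarrow> real" where
  "rec_p1 L G I \<alpha> J \<beta> q2 s x =
     (if conflict L G I \<alpha> s x
      then max (q2 s) 0 * (if q2 x > 0 then 1 else 0)
      else 2 * max (q2 s) 0 * (if q2 x > 0 then 1 else 0) * maxbeta J \<beta> x)"

end

theory Submission
  imports Defs
begin

(* Write s for the pair selected at step j and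
   w = p_2^{(j-1)}(s) > 0.  For a feasible set F of narrow pairs, p_1^{(j)}(x) is at most w when x conflicts with s
   and p_2^{(j-1)}(x) > 0, plus 2 w max_q beta^q(x) <= 2 w sum_q beta^q(x) in any case.
   Summing over F, the beta-part contributes at most 2 w J by the capacity constraints.
   For the conflict part we count the positive pairs of F conflicting with s:
   at most T via the (at most T) groups met by U_j^*, at most Delta via the binary
   constraints active at s, and at most 1 via RBs.  The last count uses the recursion:
   p_2 only decreases, and every pair is made nonpositive at the step of its own tail,
   so a pair still positive before step j has tail >= j; a chunk overlapping the chunk of s
   (whose tail is j) then contains RB j, and only one pair of F can contain RB j. *)

lemma chunk_cases:
  assumes "c \<in> chunks N"
  obtains a b where "c = {a..b}" "1 \<le> a" "a \<le> b" "b \<le> N" "Tail c = b"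
proof -
  obtain a b where "c = {a..b}" "1 \<le> a" "a \<le> b" "b \<le> N"
    using assms unfolding chunks_def by auto
  moreover have "Max {a..b} = b" using \<open>a \<le> b\<close> by (intro Max_eqI) auto
  ultimately show ?thesis using that unfolding Tail_def by blast
qed

lemma chunk_overlap_contains_tail:
  assumes "c \<in> chunks N" "c' \<in> chunks N" "Tail c' = n" "n \<le> Tail c" "c \<inter> c' \<noteq> {}"
  shows "n \<in> c"
proof -
  obtain a b where "c = {a..b}" "Tail c = b" using chunk_cases[OF assms(1)] by blast
  moreover obtain a' b' where "c' = {a'..b'}" "Tail c' = b'" using chunk_cases[OF assms(2)] by blast
  ultimately show ?thesis using assms(3-5) by auto
qed

lemma finite_pairs: "finite (pairs K L T G N)"
proof -
  have "users K L T G \<subseteq> Pow {1..K}" unfolding users_def by auto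
  moreover have "chunks N \<subseteq> Pow {1..N}" unfolding chunks_def by auto
  ultimately show ?thesis unfolding pairs_def by (auto intro: finite_subset)
qed

lemma maxbeta_bounds:
  assumes "\<forall>q\<in>{1..J}. 0 \<le> \<beta> q x"
  shows "0 \<le> maxbeta J \<beta> x" "maxbeta J \<beta> x \<le> (\<Sum>q\<in>{1..J}. \<beta> q x)"
proof -
  have "0 \<le> maxbeta J \<beta> x \<and> maxbeta J \<beta> x \<le> (\<Sum>q\<in>{1..J}. \<beta> q x)"
  proof (cases "J = 0")
    case True thus ?thesis by (simp add: maxbeta_def)
  next
    case False
    have "Max ((\<lambda>q. \<beta> q x) ` {1..J}) \<in> (\<lambda>q. \<beta> q x) ` {1..J}"
      using False by (intro Max_in) auto
    then obtain q where q: "q \<in> {1..J}" "Max ((\<lambda>q. \<beta> q x) ` {1..J}) = \<beta> q x" by auto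
    have "\<beta> q x \<le> (\<Sum>q\<in>{1..J}. \<beta> q x)" using q(1) assms by (intro member_le_sum) auto
    thus ?thesis using q assms False by (simp add: maxbeta_def)
  qed
  thus "0 \<le> maxbeta J \<beta> x" "maxbeta J \<beta> x \<le> (\<Sum>q\<in>{1..J}. \<beta> q x)" by auto
qed

lemma sum_binary_eq_card:
  assumes "finite A" "\<forall>x\<in>A. a x = 0 \<or> a x = 1"
  shows "(\<Sum>x\<in>A. a x) = real (card {x\<in>A. a x = (1::real)})"
proof -
  have "(\<Sum>x\<in>A. a x) = (\<Sum>x\<in>{x\<in>A. a x = 1}. a x)"
    using assms by (intro sum.mono_neutral_right) auto
  thus ?thesis by simp
qed

text \<open>Disjoint groups each met by U have distinct representatives in U.\<close>
lemma card_groups_meeting_le: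
  assumes "finite U" "\<forall>s\<in>S. \<forall>t\<in>S. s \<noteq> t \<longrightarrow> G s \<inter> G t = {}"
  shows "card {g\<in>S. U \<inter> G g \<noteq> {}} \<le> card U"
proof -
  define Gs where "Gs = {g\<in>S. U \<inter> G g \<noteq> {}}"
  define h where "h g = (SOME u. u \<in> U \<inter> G g)" for g
  have h_in: "h g \<in> U \<inter> G g" if "g \<in> Gs" for g
  proof -
    have "U \<inter> G g \<noteq> {}" using that unfolding Gs_def by simp
    thus ?thesis unfolding h_def by (metis some_in_eq)
  qed
  have "inj_on h Gs"
  proof (rule inj_onI)
    fix g1 g2 assume g: "g1 \<in> Gs" "g2 \<in> Gs" "h g1 = h g2"
    hence "G g1 \<inter> G g2 \<noteq> {}" using h_in[of g1] h_in[of g2] by auto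
    thus "g1 = g2" using g(1,2) assms(2) unfolding Gs_def by blast
  qed
  moreover have "h ` Gs \<subseteq> U" using h_in by auto
  ultimately have "card Gs \<le> card U" using assms(1) by (rule card_inj_on_le)
  thus ?thesis unfolding Gs_def .
qed

text \<open>If every chunk-conflict with s passes through RB n, at most T + 1 + Delta pairs of a
  feasible set conflict with s: T through groups, one through RB n, Delta through the
  binary constraints.\<close>
lemma card_conflicting_le:
  assumes disjoint: "\<forall>s\<in>{1..L}. \<forall>t\<in>{1..L}. s \<noteq> t \<longrightarrow> G s \<inter> G t = {}"
    and users: "fst s \<in> users K L T G"
    and I_finite: "finite I"
    and binary: "\<forall>q\<in>I. \<forall>x\<in>insert s F. \<alpha> q x = 0 \<or> \<alpha> q x = 1"
    and alpha_sum: "(\<Sum>q\<in>I. \<alpha> q s) \<le> real \<Delta>"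
    and feas: "feasible L G N J \<beta> I \<alpha> F" and F_finite: "finite F"
    and n: "n \<in> {1..N}"
    and A: "A \<subseteq> F" "\<forall>x\<in>A. conflict L G I \<alpha> s x \<and> (snd s \<inter> snd x \<noteq> {} \<longrightarrow> n \<in> snd x)"
  shows "card A \<le> T + 1 + \<Delta>"
proof -
  define Gs where "Gs = {g\<in>{1..L}. fst s \<inter> G g \<noteq> {}}"
  define Is where "Is = {q\<in>I. \<alpha> q s = 1}"
  define A1 where "A1 = (\<Union>g\<in>Gs. {x\<in>F. fst x \<inter> G g \<noteq> {}})"
  define A2 where "A2 = {x\<in>F. n \<in> snd x}"
  define A3 where "A3 = (\<Union>q\<in>Is. {x\<in>F. \<alpha> q x = 1})"
  have "A \<subseteq> A1 \<union> A2 \<union> A3"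
  proof
    fix x assume "x \<in> A"
    hence "x \<in> F" "conflict L G I \<alpha> s x" "snd s \<inter> snd x \<noteq> {} \<longrightarrow> n \<in> snd x" using A by auto
    thus "x \<in> A1 \<union> A2 \<union> A3"
      unfolding conflict_def A1_def A2_def A3_def Gs_def Is_def by blast
  qed
  moreover have "A1 \<subseteq> F" "A2 \<subseteq> F" "A3 \<subseteq> F" unfolding A1_def A2_def A3_def by auto
  hence "finite A1" "finite A2" "finite A3" using F_finite finite_subset by blast+
  ultimately have "card A \<le> card (A1 \<union> A2 \<union> A3)" by (intro card_mono) auto
  also have "\<dots> \<le> card A1 + card A2 + card A3"
    by (meson card_Un_le le_trans add_le_mono order_refl)
  finally have "card A \<le> card A1 + card A2 + card A3" .
  moreover have "card A1 \<le> T"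
  proof -
    have "card A1 \<le> (\<Sum>g\<in>Gs. card {x\<in>F. fst x \<inter> G g \<noteq> {}})"
      unfolding A1_def by (rule card_UN_le) (simp add: Gs_def)
    also have "\<dots> \<le> (\<Sum>g\<in>Gs. 1)"
      using feas unfolding feasible_def Gs_def by (intro sum_mono) auto
    also have "\<dots> = card Gs" by simp
    also have "\<dots> \<le> card (fst s)"
      unfolding Gs_def using users disjoint
      by (intro card_groups_meeting_le) (auto simp: users_def intro: finite_subset)
    finally show ?thesis using users unfolding users_def by simp
  qed
  moreover have "card A2 \<le> 1" using feas n unfolding feasible_def A2_def by auto
  moreover have "card A3 \<le> \<Delta>"
  proof -
    have "card A3 \<le> (\<Sum>q\<in>Is. card {x\<in>F. \<alpha> q x = 1})"
      unfolding A3_def by (rule card_UN_le) (simp add: Is_def I_finite)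
    also have "\<dots> \<le> (\<Sum>q\<in>Is. 1)"
    proof (rule sum_mono)
      fix q assume "q \<in> Is"
      thus "card {x\<in>F. \<alpha> q x = 1} \<le> 1"
        using feas binary sum_binary_eq_card[OF F_finite, of "\<alpha> q"]
        unfolding feasible_def Is_def by auto
    qed
    also have "\<dots> = card Is" by simp
    also have "\<dots> \<le> \<Delta>"
      using sum_binary_eq_card[OF I_finite, of "\<lambda>q. \<alpha> q s"] binary alpha_sum
      unfolding Is_def by auto
    finally show ?thesis .
  qed
  ultimately show ?thesis by linarith
qed

lemma rec_p1_le:
  assumes "\<forall>q\<in>{1..J}. 0 \<le> \<beta> q x"
  shows "rec_p1 L G I \<alpha> J \<beta> v s x \<le>
           (if conflict L G I \<alpha> s x \<and> v x > 0 then max (v s) 0 else 0)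
           + 2 * max (v s) 0 * (\<Sum>q\<in>{1..J}. \<beta> q x)"
proof -
  have "0 \<le> max (v s) 0" by simp
  hence "0 \<le> 2 * max (v s) 0 * maxbeta J \<beta> x"
    and "2 * max (v s) 0 * maxbeta J \<beta> x \<le> 2 * max (v s) 0 * (\<Sum>q\<in>{1..J}. \<beta> q x)"
    using maxbeta_bounds[of J \<beta> x, OF assms] by (auto intro: mult_left_mono)
  thus ?thesis using sum_nonneg[of "{1..J}" "\<lambda>q. \<beta> q x"] assms
    unfolding rec_p1_def by auto
qed

lemma sum_rec_p1_le:
  assumes feas: "feasible L G N J \<beta> I \<alpha> F" and F_finite: "finite F"
    and beta_nonneg: "\<forall>x\<in>F. \<forall>q\<in>{1..J}. 0 \<le> \<beta> q x"
    and card_A: "card {x\<in>F. conflict L G I \<alpha> s x \<and> v x > 0} \<le> m"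
  shows "(\<Sum>x\<in>F. rec_p1 L G I \<alpha> J \<beta> v s x) \<le> max (v s) 0 * (real m + 2 * real J)"
proof -
  define w where "w = max (v s) 0"
  define A where "A = {x\<in>F. conflict L G I \<alpha> s x \<and> v x > 0}"
  have w_nonneg: "0 \<le> w" unfolding w_def by simp
  have "(\<Sum>x\<in>F. rec_p1 L G I \<alpha> J \<beta> v s x)
        \<le> (\<Sum>x\<in>F. (if x \<in> A then w else 0) + 2 * w * (\<Sum>q\<in>{1..J}. \<beta> q x))"
    using rec_p1_le beta_nonneg unfolding A_def w_def by (intro sum_mono) auto
  also have "\<dots> = w * real (card A) + 2 * w * (\<Sum>q\<in>{1..J}. \<Sum>x\<in>F. \<beta> q x)"
    using F_finite unfolding A_def
    by (simp add: sum.distrib sum.If_cases Int_def sum_distrib_left sum.swap[of _ _ F])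
  also have "\<dots> \<le> w * real m + 2 * w * real J"
  proof -
    have "(\<Sum>q\<in>{1..J}. \<Sum>x\<in>F. \<beta> q x) \<le> real J"
      using feas sum_mono[of "{1..J}" _ "\<lambda>_. 1::real"] unfolding feasible_def by auto
    thus ?thesis using card_A w_nonneg unfolding A_def
      by (intro add_mono mult_left_mono) auto
  qed
  finally show ?thesis unfolding w_def by (simp add: algebra_simps)
qed

lemma opt_val_le:
  assumes "finite M" "\<And>F. F \<subseteq> M \<Longrightarrow> feasible L G N J \<beta> I \<alpha> F \<Longrightarrow> (\<Sum>x\<in>F. f x) \<le> B"
  shows "opt_val M L G N J \<beta> I \<alpha> f \<le> B"
proof -
  define S where "S = {(\<Sum>x\<in>F. f x) | F. F \<subseteq> M \<and> feasible L G N J \<beta> I \<alpha> F}"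
  have "S \<subseteq> (\<lambda>F. \<Sum>x\<in>F. f x) ` Pow M" unfolding S_def by auto
  hence "finite S" using assms(1) by (auto intro: finite_subset)
  moreover have "feasible L G N J \<beta> I \<alpha> {}" unfolding feasible_def by simp
  hence "(\<Sum>x\<in>{}. f x) \<in> S" unfolding S_def by blast
  moreover have "\<forall>a\<in>S. a \<le> B" using assms(2) unfolding S_def by auto
  ultimately have "Max S \<le> B" by (subst Max_le_iff) auto
  thus ?thesis unfolding opt_val_def S_def .
qed

locale tail_recursion =
  fixes N :: nat and M :: "pair set" and L :: nat and G :: "nat \<Rightarrow> nat set"
    and I :: "nat set" and \<alpha> \<beta> :: "nat \<Rightarrow> pair \<Rightarrow> real" and J :: nat
    and p2 :: "nat \<Rightarrow> pair \<Rightarrow> real" and star :: "nat \<Rightarrow> pair"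
  assumes M_chunks: "\<forall>x\<in>M. snd x \<in> chunks N"
    and beta_nonneg: "\<forall>x\<in>M. \<forall>q\<in>{1..J}. 0 \<le> \<beta> q x"
    and star_max: "\<forall>i\<in>{1..N}. {x\<in>M. Tail (snd x) = i} \<noteq> {} \<longrightarrow>
         star i \<in> M \<and> Tail (snd (star i)) = i \<and>
         (\<forall>x\<in>M. Tail (snd x) = i \<longrightarrow> p2 (i - 1) x \<le> p2 (i - 1) (star i))"
    and p2_step: "\<forall>i\<in>{1..N}. {x\<in>M. Tail (snd x) = i} \<noteq> {} \<longrightarrow>
         (\<forall>x\<in>M. p2 i x = p2 (i - 1) x - rec_p1 L G I \<alpha> J \<beta> (p2 (i - 1)) (star i) x)"
    and p2_step_empty: "\<forall>i\<in>{1..N}. {x\<in>M. Tail (snd x) = i} = {} \<longrightarrow>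
         (\<forall>x\<in>M. p2 i x = p2 (i - 1) x)"
begin

text \<open>Since p_1 is nonnegative, p_2 never increases along the recursion.\<close>
lemma p2_antimono:
  assumes "i \<le> k" "k \<le> N" "x \<in> M"
  shows "p2 k x \<le> p2 i x"
  using assms(1,2)
proof (induction k rule: dec_induct)
  case base thus ?case by simp
next
  case (step k)
  have "0 \<le> rec_p1 L G I \<alpha> J \<beta> (p2 k) (star (Suc k)) x"
    using maxbeta_bounds(1)[of J \<beta> x] beta_nonneg assms(3)
    unfolding rec_p1_def by auto
  hence "p2 (Suc k) x \<le> p2 k x"
    using p2_step p2_step_empty step.prems assms(3) by (cases "{y\<in>M. Tail (snd y) = Suc k} = {}") auto
  thus ?case using step by simp
qed

text \<open>At the step of its own tail, a pair conflicts (via its last RB) with the selected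
  pair and is dominated by it, so its value drops to at most zero.\<close>
lemma p2_tail_nonpos:
  assumes x: "x \<in> M"
  shows "p2 (Tail (snd x)) x \<le> 0"
proof -
  define i where "i = Tail (snd x)"
  obtain a b where ab: "snd x = {a..b}" "1 \<le> a" "a \<le> b" "b \<le> N" "Tail (snd x) = b"
    using chunk_cases M_chunks x by metis
  have i: "i \<in> {1..N}" using ab unfolding i_def by auto
  have "x \<in> {y\<in>M. Tail (snd y) = i}" using x unfolding i_def by simp
  hence ne: "{y\<in>M. Tail (snd y) = i} \<noteq> {}" by blast
  have s: "star i \<in> M" "Tail (snd (star i)) = i" "p2 (i - 1) x \<le> p2 (i - 1) (star i)"
    using star_max i ne x unfolding i_def by auto
  have "i \<in> snd (star i)"
    using chunk_cases[of "snd (star i)" N] M_chunks s(1,2) by (metis atLeastAtMost_iff order_refl)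
  hence "conflict L G I \<alpha> (star i) x" using ab i_def unfolding conflict_def by auto
  moreover have "p2 i x = p2 (i - 1) x - rec_p1 L G I \<alpha> J \<beta> (p2 (i - 1)) (star i) x"
    using p2_step i ne x by blast
  ultimately show ?thesis using s(3) unfolding i_def rec_p1_def by (auto split: if_splits)
qed

lemma p2_pos_tail:
  assumes "j \<le> N" "x \<in> M" "p2 (j - 1) x > 0"
  shows "j \<le> Tail (snd x)"
proof (rule ccontr)
  assume "\<not> j \<le> Tail (snd x)"
  hence "p2 (j - 1) x \<le> p2 (Tail (snd x)) x" using p2_antimono assms(1,2) by simp
  thus False using p2_tail_nonpos[OF assms(2)] assms(3) by simp
qed

lemma p2_pos_overlap:
  assumes "j \<le> N" "s \<in> M" "Tail (snd s) = j" "x \<in> M" "p2 (j - 1) x > 0"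
    and "snd s \<inter> snd x \<noteq> {}"
  shows "j \<in> snd x"
  using chunk_overlap_contains_tail[of "snd x" N "snd s" j] p2_pos_tail[of j x] M_chunks assms
  by (auto simp: Int_commute)

end

theorem lemma2:
  fixes K L N T J \<Delta> :: nat
    and G :: "nat \<Rightarrow> nat set"
    and I :: "nat set"
    and p :: "pair \<Rightarrow> real"
    and \<beta> \<alpha> :: "nat \<Rightarrow> pair \<Rightarrow> real"
    and p2 :: "nat \<Rightarrow> pair \<Rightarrow> real"
    and star :: "nat \<Rightarrow> pair"
    and j :: nat
  defines "M \<equiv> narrow K L T G N J \<beta>"
  assumes groups_nonempty: "\<forall>s\<in>{1..L}. G s \<noteq> {}"
    and groups_disjoint: "\<forall>s\<in>{1..L}. \<forall>t\<in>{1..L}. s \<noteq> t \<longrightarrow> G s \<inter> G t = {}"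
    and groups_cover: "(\<Union>s\<in>{1..L}. G s) = {1..K}"
    and p_nonneg: "\<forall>x\<in>pairs K L T G N. p x \<ge> 0"
    and beta_range: "\<forall>q\<in>{1..J}. \<forall>x\<in>pairs K L T G N. 0 \<le> \<beta> q x \<and> \<beta> q x \<le> 1"
    and I_finite: "finite I"
    and alpha_binary: "\<forall>q\<in>I. \<forall>x\<in>pairs K L T G N. \<alpha> q x = 0 \<or> \<alpha> q x = 1"
    and alpha_sum: "\<forall>x\<in>pairs K L T G N. (\<Sum>q\<in>I. \<alpha> q x) \<le> real \<Delta>"
    and p2_init: "\<forall>x\<in>M. p2 0 x = p x"
    and star_max: "\<forall>i\<in>{1..N}. {x\<in>M. Tail (snd x) = i} \<noteq> {} \<longrightarrow>
         star i \<in> M \<and> Tail (snd (star i)) = i \<and>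
         (\<forall>x\<in>M. Tail (snd x) = i \<longrightarrow> p2 (i - 1) x \<le> p2 (i - 1) (star i))"
    and p2_step: "\<forall>i\<in>{1..N}. {x\<in>M. Tail (snd x) = i} \<noteq> {} \<longrightarrow>
         (\<forall>x\<in>M. p2 i x = p2 (i - 1) x - rec_p1 L G I \<alpha> J \<beta> (p2 (i - 1)) (star i) x)"
    and p2_step_empty: "\<forall>i\<in>{1..N}. {x\<in>M. Tail (snd x) = i} = {} \<longrightarrow>
         (\<forall>x\<in>M. p2 i x = p2 (i - 1) x)"
    and j_range: "j \<in> {1..N}"
    and S_nonempty: "{x\<in>M. Tail (snd x) = j} \<noteq> {}" "p2 (j - 1) (star j) > 0"
  shows "p2 (j - 1) (star j) \<ge>
           opt_val M L G N J \<beta> I \<alpha> (rec_p1 L G I \<alpha> J \<beta> (p2 (j - 1)) (star j))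
           / (real T + 1 + real \<Delta> + 2 * real J)"
proof -
  have M_pairs: "M \<subseteq> pairs K L T G N" unfolding M_def narrow_def by auto
  interpret tail_recursion N M L G I \<alpha> \<beta> J p2 star
    using M_pairs beta_range star_max p2_step p2_step_empty
    by unfold_locales (auto simp: pairs_def)
  define s where "s = star j"
  have s: "s \<in> M" "Tail (snd s) = j" using star_max j_range S_nonempty(1) unfolding s_def by blast+
  have M_finite: "finite M" using M_pairs finite_pairs finite_subset by blast
  have F_bound: "(\<Sum>x\<in>F. rec_p1 L G I \<alpha> J \<beta> (p2 (j - 1)) s x)
          \<le> p2 (j - 1) s * (real T + 1 + real \<Delta> + 2 * real J)"
    if F: "F \<subseteq> M" "feasible L G N J \<beta> I \<alpha> F" for F
  proof -
    have F_finite: "finite F" using F(1) M_finite finite_subset by blast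
    define A where "A = {x\<in>F. conflict L G I \<alpha> s x \<and> p2 (j - 1) x > 0}"
    have A_conflicts: "\<forall>x\<in>A. conflict L G I \<alpha> s x \<and> (snd s \<inter> snd x \<noteq> {} \<longrightarrow> j \<in> snd x)"
    proof
      fix x assume "x \<in> A"
      hence "x \<in> M" "conflict L G I \<alpha> s x" "p2 (j - 1) x > 0" using F(1) unfolding A_def by auto
      thus "conflict L G I \<alpha> s x \<and> (snd s \<inter> snd x \<noteq> {} \<longrightarrow> j \<in> snd x)"
        using p2_pos_overlap[of j s x] j_range s by auto
    qed
    have s_users: "fst s \<in> users K L T G" using s(1) M_pairs by (auto simp: pairs_def)
    have binary: "\<forall>q\<in>I. \<forall>x\<in>insert s F. \<alpha> q x = 0 \<or> \<alpha> q x = 1"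
      using alpha_binary F(1) s(1) M_pairs by blast
    have "(\<Sum>q\<in>I. \<alpha> q s) \<le> real \<Delta>" using alpha_sum s(1) M_pairs by blast
    from card_conflicting_le[OF groups_disjoint s_users I_finite binary this F(2) F_finite j_range
        _ A_conflicts]
    have "card A \<le> T + 1 + \<Delta>" unfolding A_def by blast
    moreover have "\<forall>x\<in>F. \<forall>q\<in>{1..J}. 0 \<le> \<beta> q x" using beta_nonneg F(1) by blast
    ultimately have "(\<Sum>x\<in>F. rec_p1 L G I \<alpha> J \<beta> (p2 (j - 1)) s x)
        \<le> max (p2 (j - 1) s) 0 * (real (T + 1 + \<Delta>) + 2 * real J)"
      using sum_rec_p1_le[OF F(2) F_finite] unfolding A_def by blast
    thus ?thesis using S_nonempty(2) unfolding s_def by (simp add: algebra_simps)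
  qed
  have "opt_val M L G N J \<beta> I \<alpha> (rec_p1 L G I \<alpha> J \<beta> (p2 (j - 1)) s)
           \<le> p2 (j - 1) s * (real T + 1 + real \<Delta> + 2 * real J)"
    using F_bound by (rule opt_val_le[OF M_finite])
  moreover have "0 < real T + 1 + real \<Delta> + 2 * real J" by simp
  ultimately show ?thesis unfolding s_def by (simp add: pos_divide_le_eq)
qed

end
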